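(* Let $m,n\in\mathbb N$, let $\Box=(n^m)$, and let $\lambda$ be a partition (possibly empty) such that $[\lambda^+]\subseteq[\Box]$, where $\lambda^+=(\lambda_1+1,\lambda_2,\dots,\lambda_{\ell(\lambda)})$. Then \[\frac{f_\lambda\, f_{\Box\setminus\lambda^+}}{f_{\lambda^+}\, f_{\Box\setminus\lambda}}=\frac{(m+\lambda_1)(n-\lambda_1)}{(|\lambda|+1)(mn-|\lambda|)}.\]
   Context: $f_\mu$ denotes the number of standard Young tableaux of shape $\mu$ ($f_\emptyset=1$); $[\mu]=\{(i,j):i\in[\ell(\mu)],j\in[\mu_i]\}$ is the Young diagram (matrix coordinates); for the empty partition $\lambda_1=0$. For $\Box=(n^m)$ and $[\mu]\subseteq[\Box]$, $\Box\setminus\mu$ is the partition with Young diagram $\{(m-i+1,n-j+1):(i,j)\in[\Box]\setminus[\mu]\}$. *)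

theory Defs
  imports Complex_Main
begin

text \<open>Partitions are represented as lists of positive naturals in weakly decreasing order.
  Parts are indexed from 1: the i-th part is mu ! (i - 1).\<close>

definition is_partition :: "nat list \<Rightarrow> bool" where
  "is_partition mu \<longleftrightarrow> sorted_wrt (\<ge>) mu \<and> (\<forall>x\<in>set mu. 0 < x)"

definition young :: "nat list \<Rightarrow> (nat \<times> nat) set" where
  "young mu = {(i, j). 1 \<le> i \<and> i \<le> length mu \<and> 1 \<le> j \<and> j \<le> mu ! (i - 1)}"

definition psize :: "nat list \<Rightarrow> nat" where
  "psize mu = sum_list mu"

definition first_part :: "nat list \<Rightarrow> nat" where
  "first_part mu = (case mu of [] \<Rightarrow> 0 | x # _ \<Rightarrow> x)"

definition plus_part :: "nat list \<Rightarrow> nat list" where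
  "plus_part mu = (case mu of [] \<Rightarrow> [1] | x # xs \<Rightarrow> (x + 1) # xs)"

definition syt :: "nat list \<Rightarrow> (nat \<times> nat \<Rightarrow> nat) set" where
  "syt mu = {T. bij_betw T (young mu) {1..psize mu}
              \<and> (\<forall>c. c \<notin> young mu \<longrightarrow> T c = 0)
              \<and> (\<forall>i j. (i, j) \<in> young mu \<and> (i, j + 1) \<in> young mu \<longrightarrow> T (i, j) < T (i, j + 1))
              \<and> (\<forall>i j. (i, j) \<in> young mu \<and> (i + 1, j) \<in> young mu \<longrightarrow> T (i, j) < T (i + 1, j))}"

definition num_syt :: "nat list \<Rightarrow> nat" where
  "num_syt mu = card (syt mu)"

definition box :: "nat \<Rightarrow> nat \<Rightarrow> (nat \<times> nat) set" where
  "box m n = {(i, j). 1 \<le> i \<and> i \<le> m \<and> 1 \<le> j \<and> j \<le> n}"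

definition box_minus :: "nat \<Rightarrow> nat \<Rightarrow> nat list \<Rightarrow> nat list" where
  "box_minus m n mu = (THE nu. is_partition nu \<and>
      young nu = {(m - i + 1, n - j + 1) | i j. (i, j) \<in> box m n - young mu})"

end

theory Submission
  imports Defs
begin

text \<open>Write a partition with at most k parts as a_0 >= ... >= a_(k-1), of size N, and let
  l_i = a_i + (k - 1 - i) be its beta numbers. The Frobenius formula
  f = N! prod_(p<q) (l_p - l_q) / prod_i l_i! holds because both sides satisfy the branching rule
  f_a = sum over corners c of f_(a - c): removing the corner of row i lowers l_i by one, which
  multiplies the right-hand side by l_i c_i / N with c_i = prod_(j ~= i) (l_i - l_j - 1) / (l_i - l_j),
  and a partial fraction argument gives sum_i l_i c_i = sum_i l_i - k(k-1)/2 = N.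

  Passing from lambda to lambda+ raises l_0 by one, while the complement of lambda+ in the
  m x n box arises from that of lambda by lowering its last beta number by one. The beta numbers
  of the complement are the reflections n + m - 1 - l_(m-1-r), so the two factors c cancel and
  only (m + lambda_1)(n - lambda_1) / ((|lambda| + 1)(mn - |lambda|)) survives.\<close>

definition shift_ratio :: "(nat \<Rightarrow> real) \<Rightarrow> nat \<Rightarrow> nat \<Rightarrow> real" where
  "shift_ratio x k i = (\<Prod>j\<in>{..<k} - {i}. (x i - x j - 1) / (x i - x j))"

definition shift_quotient :: "(nat \<Rightarrow> real) \<Rightarrow> nat \<Rightarrow> real \<Rightarrow> real" where
  "shift_quotient x k z = (\<Prod>j<k. (z - x j - 1) / (z - x j))"

lemma shift_ratio_Suc:
  assumes "i < k"
  shows "shift_ratio x (Suc k) i = shift_ratio x k i * ((x i - x k - 1) / (x i - x k))"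
proof -
  have "{..<Suc k} - {i} = insert k ({..<k} - {i})" using assms by auto
  then show ?thesis unfolding shift_ratio_def by (simp add: mult.commute)
qed

lemma shift_ratio_Suc_last: "shift_ratio x (Suc k) k = shift_quotient x k (x k)"
proof -
  have "{..<Suc k} - {k} = {..<k}" by auto
  then show ?thesis unfolding shift_ratio_def shift_quotient_def by simp
qed

lemma inj_on_lessThan_SucD:
  assumes "inj_on x {..<Suc k}"
  shows "inj_on x {..<k}" and "x k \<notin> x ` {..<k}"
  using assms by (auto simp: inj_on_def) (metis lessThan_iff less_Suc_eq less_irrefl)

lemma partial_fractions_shift_factor:
  fixes X a b c :: real
  assumes "a \<noteq> 0" "b \<noteq> 0" "b - a \<noteq> 0"
  shows "X / a * (c * ((b - 1) / b)) = X / a * c - (X / a * c - X / b * c) / (b - a)"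
  using assms by (simp add: field_simps)

text \<open>Stated for a free point z so that the induction goes through; the instance z = x k
  is the induction step of sum_mult_shift_ratio.\<close>

lemma sum_shift_ratio_partial_fractions:
  assumes "inj_on x {..<k}" "z \<notin> x ` {..<k}"
  shows "(\<Sum>i<k. x i / (x i - z) * shift_ratio x k i) = z * shift_quotient x k z - z + real k"
  using assms
proof (induction k arbitrary: z)
  case 0
  then show ?case by (simp add: shift_quotient_def)
next
  case (Suc k)
  let ?L = "\<lambda>w. (\<Sum>i<k. x i / (x i - w) * shift_ratio x k i)"
  note inj = inj_on_lessThan_SucD[OF Suc.prems(1)]
  have z: "z \<notin> x ` {..<k}" "z \<noteq> x k" using Suc.prems(2) by auto
  have step: "x i / (x i - z) * (shift_ratio x k i * ((x i - x k - 1) / (x i - x k)))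
      = x i / (x i - z) * shift_ratio x k i
        - (x i / (x i - z) * shift_ratio x k i - x i / (x i - x k) * shift_ratio x k i) / (z - x k)"
    if "i < k" for i
  proof -
    have "x i - z \<noteq> 0" "x i - x k \<noteq> 0"
      using z(1) inj(2) that by (metis image_eqI lessThan_iff right_minus_eq)+
    moreover have "(x i - x k) - (x i - z) = z - x k" by simp
    ultimately show ?thesis
      using z(2) partial_fractions_shift_factor[of "x i - z" "x i - x k" "x i" "shift_ratio x k i"]
      by simp
  qed
  have "(\<Sum>i<Suc k. x i / (x i - z) * shift_ratio x (Suc k) i)
      = (\<Sum>i<k. x i / (x i - z) * (shift_ratio x k i * ((x i - x k - 1) / (x i - x k))))
        + x k / (x k - z) * shift_quotient x k (x k)"
    by (simp add: shift_ratio_Suc shift_ratio_Suc_last ac_simps)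
  also have "(\<Sum>i<k. x i / (x i - z) * (shift_ratio x k i * ((x i - x k - 1) / (x i - x k))))
      = (\<Sum>i<k. x i / (x i - z) * shift_ratio x k i
          - (x i / (x i - z) * shift_ratio x k i - x i / (x i - x k) * shift_ratio x k i) / (z - x k))"
    by (rule sum.cong[OF refl]) (rule step, simp)
  also have "\<dots> = ?L z - (?L z - ?L (x k)) / (z - x k)"
    by (simp add: sum_subtractf sum_divide_distrib[symmetric])
  finally have "(\<Sum>i<Suc k. x i / (x i - z) * shift_ratio x (Suc k) i)
      = ?L z - (?L z - ?L (x k)) / (z - x k) + x k / (x k - z) * shift_quotient x k (x k)" .
  also have "\<dots> = z * shift_quotient x (Suc k) z - z + real (Suc k)"
  proof -
    have G: "shift_quotient x (Suc k) z = shift_quotient x k z * ((z - x k - 1) / (z - x k))"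
      by (simp add: shift_quotient_def)
    show ?thesis
      unfolding Suc.IH[OF inj(1) z(1)] Suc.IH[OF inj] G using z(2) by (simp add: field_simps)
  qed
  finally show ?case .
qed

lemma sum_mult_shift_ratio:
  assumes "inj_on x {..<k}"
  shows "(\<Sum>i<k. x i * shift_ratio x k i) = (\<Sum>i<k. x i) - real k * (real k - 1) / 2"
  using assms
proof (induction k)
  case 0
  then show ?case by simp
next
  case (Suc k)
  note inj = inj_on_lessThan_SucD[OF Suc.prems]
  have step: "x i * (shift_ratio x k i * ((x i - x k - 1) / (x i - x k)))
      = x i * shift_ratio x k i - x i / (x i - x k) * shift_ratio x k i" if "i < k" for i
  proof -
    have "x i \<noteq> x k" using inj(2) that by (metis image_eqI lessThan_iff)
    then show ?thesis by (simp add: field_simps)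
  qed
  have "(\<Sum>i<Suc k. x i * shift_ratio x (Suc k) i)
     = (\<Sum>i<k. x i * (shift_ratio x k i * ((x i - x k - 1) / (x i - x k))))
       + x k * shift_quotient x k (x k)"
    by (simp add: shift_ratio_Suc shift_ratio_Suc_last)
  also have "(\<Sum>i<k. x i * (shift_ratio x k i * ((x i - x k - 1) / (x i - x k))))
     = (\<Sum>i<k. x i * shift_ratio x k i) - (\<Sum>i<k. x i / (x i - x k) * shift_ratio x k i)"
    by (subst sum.cong[OF refl step]) (simp_all add: sum_subtractf)
  finally show ?case
    unfolding sum_shift_ratio_partial_fractions[OF inj] Suc.IH[OF inj(1)] by (simp add: field_simps)
qed

definition vandermonde :: "(nat \<Rightarrow> real) \<Rightarrow> nat \<Rightarrow> real" where
  "vandermonde x k = (\<Prod>p<k. \<Prod>q<k. if p < q then x p - x q else 1)"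

lemma vandermonde_pos:
  assumes "\<And>p q. p < q \<Longrightarrow> q < k \<Longrightarrow> x q < x p"
  shows "vandermonde x k > 0"
  unfolding vandermonde_def using assms by (intro prod_pos) auto

lemma prod_lessThan_split_at:
  fixes f :: "nat \<Rightarrow> 'a::comm_monoid_mult"
  assumes "i < k"
  shows "(\<Prod>q<k. if i < q then f q else 1) * (\<Prod>q<k. if q < i then f q else 1)
       = (\<Prod>q\<in>{..<k} - {i}. f q)"
proof -
  have "(\<Prod>q<k. if i < q then f q else 1) * (\<Prod>q<k. if q < i then f q else 1)
      = (\<Prod>q<k. if q \<noteq> i then f q else 1)"
    by (simp add: prod.distrib[symmetric]) (rule prod.cong, auto)
  also have "\<dots> = (\<Prod>q\<in>{..<k} - {i}. f q)"
  proof -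
    have "{..<k} \<inter> {q. q \<noteq> i} = {..<k} - {i}" by auto
    then show ?thesis by (simp add: prod.If_cases)
  qed
  finally show ?thesis .
qed

lemma vandermonde_decrement:
  assumes inj: "inj_on x {..<k}" and i: "i < k"
  shows "vandermonde (x(i := x i - 1)) k = vandermonde x k * shift_ratio x k i"
proof -
  define r where "r j = (x i - x j - 1) / (x i - x j)" for j
  \<comment> \<open>the correction factors of the pairs (i, q) with i < q and (p, i) with p < i\<close>
  define A where "A p q = (if p = i \<and> i < q then r q else 1)" for p q
  define B where "B p q = (if q = i \<and> p < i then r p else 1)" for p q
  have factor: "(if p < q then (x(i := x i - 1)) p - (x(i := x i - 1)) q else 1)
      = (if p < q then x p - x q else 1) * (A p q * B p q)" if "p < k" "q < k" for p q
  proof -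
    have "x p \<noteq> x q" if "p \<noteq> q" using inj \<open>p < k\<close> \<open>q < k\<close> that by (auto simp: inj_on_def)
    then show ?thesis by (auto simp: A_def B_def r_def field_simps)
  qed
  have "vandermonde (x(i := x i - 1)) k
      = (\<Prod>p<k. \<Prod>q<k. (if p < q then x p - x q else 1) * (A p q * B p q))"
    unfolding vandermonde_def
    by (rule prod.cong[OF refl], rule prod.cong[OF refl], rule factor) auto
  also have "\<dots> = vandermonde x k * ((\<Prod>p<k. \<Prod>q<k. A p q) * (\<Prod>p<k. \<Prod>q<k. B p q))"
    unfolding vandermonde_def by (simp add: prod.distrib)
  also have "(\<Prod>p<k. \<Prod>q<k. A p q) = (\<Prod>q<k. if i < q then r q else 1)"
  proof -
    have "(\<Prod>p<k. \<Prod>q<k. A p q) = (\<Prod>p<k. if p = i then (\<Prod>q<k. if i < q then r q else 1) else 1)"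
      by (rule prod.cong[OF refl]) (simp add: A_def)
    then show ?thesis using i by simp
  qed
  also have "(\<Prod>p<k. \<Prod>q<k. B p q) = (\<Prod>p<k. if p < i then r p else 1)"
  proof -
    have "(\<Prod>p<k. \<Prod>q<k. B p q) = (\<Prod>p<k. \<Prod>q<k. if q = i then (if p < i then r p else 1) else 1)"
      by (rule prod.cong[OF refl], rule prod.cong[OF refl]) (simp add: B_def)
    then show ?thesis using i by simp
  qed
  also have "(\<Prod>q<k. if i < q then r q else 1) * (\<Prod>p<k. if p < i then r p else 1) = shift_ratio x k i"
    unfolding prod_lessThan_split_at[OF i] shift_ratio_def r_def ..
  finally show ?thesis .
qed

definition beta :: "(nat \<Rightarrow> nat) \<Rightarrow> nat \<Rightarrow> nat \<Rightarrow> nat" where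
  "beta a k i = a i + (k - 1 - i)"

definition frobenius_count :: "(nat \<Rightarrow> nat) \<Rightarrow> nat \<Rightarrow> real" where
  "frobenius_count a k = fact (\<Sum>i<k. a i) * vandermonde (\<lambda>i. real (beta a k i)) k
                          / (\<Prod>i<k. fact (beta a k i))"

definition decreasing_upto :: "(nat \<Rightarrow> nat) \<Rightarrow> nat \<Rightarrow> bool" where
  "decreasing_upto a k \<longleftrightarrow> (\<forall>p q. p \<le> q \<longrightarrow> q < k \<longrightarrow> a q \<le> a p)"

lemma beta_strict_decreasing:
  assumes "decreasing_upto a k" "p < q" "q < k"
  shows "beta a k q < beta a k p"
proof -
  have "a q \<le> a p" using assms unfolding decreasing_upto_def by simp
  moreover have "k - 1 - q < k - 1 - p" using assms(2,3) by arith
  ultimately show ?thesis unfolding beta_def by simp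
qed

lemma inj_on_beta: "decreasing_upto a k \<Longrightarrow> inj_on (beta a k) {..<k}"
  unfolding inj_on_def by (metis lessThan_iff linorder_neqE_nat beta_strict_decreasing less_irrefl)

lemma frobenius_count_pos:
  assumes "decreasing_upto a k"
  shows "frobenius_count a k > 0"
proof -
  have "vandermonde (\<lambda>i. real (beta a k i)) k > 0"
    by (rule vandermonde_pos) (simp add: beta_strict_decreasing[OF assms])
  then show ?thesis unfolding frobenius_count_def by (auto intro!: divide_pos_pos prod_pos)
qed

lemma sum_fun_upd_decrement:
  fixes a :: "nat \<Rightarrow> nat"
  assumes "i < k" "0 < a i"
  shows "(\<Sum>j<k. (a(i := a i - 1)) j) + 1 = (\<Sum>j<k. a j)"
proof -
  have "(\<Sum>j<k. (a(i := a i - 1)) j) = (a i - 1) + (\<Sum>j\<in>{..<k} - {i}. a j)"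
    using assms(1) by (simp add: sum.remove[of "{..<k}" i])
  moreover have "(\<Sum>j<k. a j) = a i + (\<Sum>j\<in>{..<k} - {i}. a j)"
    using assms(1) by (simp add: sum.remove[of "{..<k}" i])
  ultimately show ?thesis using assms(2) by simp
qed

lemma prod_fact_fun_upd_decrement:
  fixes l :: "nat \<Rightarrow> nat"
  assumes i: "i < k" and pos: "0 < l i"
  shows "(\<Prod>j<k. fact (l j) :: real) = real (l i) * (\<Prod>j<k. fact ((l(i := l i - 1)) j))"
proof -
  have "(\<Prod>j<k. fact (l j) :: real) = fact (l i) * (\<Prod>j\<in>{..<k} - {i}. fact (l j))"
    using i by (simp add: prod.remove[of "{..<k}" i])
  moreover have "(\<Prod>j<k. fact ((l(i := l i - 1)) j) :: real)
      = fact (l i - 1) * (\<Prod>j\<in>{..<k} - {i}. fact (l j))"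
    using i prod.remove[of "{..<k}" i "\<lambda>j. fact ((l(i := l i - 1)) j) :: real"] by simp
  moreover have "(fact (l i) :: real) = real (l i) * fact (l i - 1)"
    using pos by (rule fact_reduce)
  ultimately show ?thesis by simp
qed

lemma frobenius_count_decrement:
  assumes dec: "decreasing_upto a k" and i: "i < k" and ai: "0 < a i"
  shows "frobenius_count (a(i := a i - 1)) k
       = frobenius_count a k * (real (beta a k i) * shift_ratio (\<lambda>j. real (beta a k j)) k i)
         / real (\<Sum>j<k. a j)"
proof -
  define a' where "a' = a(i := a i - 1)"
  define N where "N = (\<Sum>j<k. a j)"
  define x where "x = (\<lambda>j. real (beta a k j))"
  have N: "(\<Sum>j<k. a' j) + 1 = N" unfolding a'_def N_def using sum_fun_upd_decrement[of i k a, OF i ai] .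
  have beta_i: "0 < beta a k i" using ai by (simp add: beta_def)
  have beta': "beta a' k = (beta a k)(i := beta a k i - 1)"
    using ai by (auto simp: beta_def fun_eq_iff a'_def)
  have x': "(\<lambda>j. real (beta a' k j)) = x(i := x i - 1)"
    unfolding beta' using beta_i by (auto simp: x_def fun_eq_iff)
  have "inj_on x {..<k}" using inj_on_beta[OF dec] by (auto simp: inj_on_def x_def)
  then have V: "vandermonde (\<lambda>j. real (beta a' k j)) k = vandermonde x k * shift_ratio x k i"
    unfolding x' by (rule vandermonde_decrement[OF _ i])
  have P: "(\<Prod>j<k. fact (beta a k j) :: real) = real (beta a k i) * (\<Prod>j<k. fact (beta a' k j))"
    unfolding beta' by (rule prod_fact_fun_upd_decrement[of i k "beta a k", OF i beta_i])
  have F: "(fact N :: real) = real N * fact (N - 1)"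
    using N by (intro fact_reduce) simp
  have "frobenius_count a' k = fact (N - 1) * (vandermonde x k * shift_ratio x k i)
                               / (\<Prod>j<k. fact (beta a' k j))"
  proof -
    have "(\<Sum>j<k. a' j) = N - 1" using N by simp
    then show ?thesis unfolding frobenius_count_def V by simp
  qed
  also have "\<dots> = frobenius_count a k * (x i * shift_ratio x k i) / real N"
  proof -
    have "real (beta a k i) \<noteq> 0" "real N \<noteq> 0" "(\<Prod>j<k. fact (beta a' k j) :: real) \<noteq> 0"
      using beta_i N by auto
    then show ?thesis
      unfolding frobenius_count_def N_def[symmetric] x_def[symmetric] F P
      by (simp add: x_def field_simps)
  qed
  finally show ?thesis unfolding N_def x_def a'_def .
qed

lemma prod_lessThan_gap_fact: "(\<Prod>q<k. if p < q then real q - real p else 1) = fact (k - 1 - p)"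
proof (induction k)
  case 0
  then show ?case by simp
next
  case (Suc k)
  show ?case
  proof (cases "p < k")
    case True
    then have "(fact (Suc k - 1 - p) :: real) = real (k - p) * fact (k - 1 - p)"
      by (simp add: fact_reduce Suc_diff_Suc)
    then show ?thesis using Suc True by simp
  next
    case False
    then show ?thesis using Suc by simp
  qed
qed

lemma frobenius_count_zero:
  assumes "\<And>i. i < k \<Longrightarrow> a i = 0"
  shows "frobenius_count a k = 1"
proof -
  have beta: "beta a k i = k - 1 - i" if "i < k" for i using assms that by (simp add: beta_def)
  have "vandermonde (\<lambda>i. real (beta a k i)) k = (\<Prod>p<k. \<Prod>q<k. if p < q then real q - real p else 1)"
    unfolding vandermonde_def by (intro prod.cong refl) (auto simp: beta)
  also have "\<dots> = (\<Prod>p<k. fact (beta a k p))"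
    by (rule prod.cong) (simp_all add: prod_lessThan_gap_fact beta)
  finally show ?thesis unfolding frobenius_count_def using assms by simp
qed

definition removable :: "(nat \<Rightarrow> nat) \<Rightarrow> nat \<Rightarrow> nat \<Rightarrow> bool" where
  "removable a k i \<longleftrightarrow> i < k \<and> 0 < a i \<and> (i + 1 = k \<or> a (i + 1) < a i)"

lemma decreasing_upto_decrement:
  assumes dec: "decreasing_upto a k" and rem: "removable a k i"
  shows "decreasing_upto (a(i := a i - 1)) k"
  unfolding decreasing_upto_def
proof (intro allI impI)
  fix p q assume pq: "p \<le> q" and qk: "q < k"
  have le: "a q \<le> a p" if "p \<le> q" "q < k" for p q using dec that unfolding decreasing_upto_def by blast
  show "(a(i := a i - 1)) q \<le> (a(i := a i - 1)) p"
  proof (cases "p = i \<and> q \<noteq> i")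
    case True
    then have "i + 1 < k" "a q \<le> a (i + 1)" using pq qk le by auto
    then show ?thesis using True rem unfolding removable_def by auto
  next
    case False
    then show ?thesis using le[OF pq qk] by auto
  qed
qed

lemma beta_mult_shift_ratio_not_removable:
  assumes dec: "decreasing_upto a k" and i: "i < k" and nrem: "\<not> removable a k i"
  shows "real (beta a k i) * shift_ratio (\<lambda>j. real (beta a k j)) k i = 0"
proof (cases "i + 1 = k")
  case True
  then have "a i = 0" using i nrem unfolding removable_def by auto
  then show ?thesis using True by (simp add: beta_def)
next
  case False
  then have "a (i + 1) = a i" using i nrem dec unfolding removable_def decreasing_upto_def
    by (metis Suc_eq_plus1 Suc_lessI le_add1 le_neq_implies_less not_gr0 not_less0)
  then have "beta a k (i + 1) + 1 = beta a k i" using i False unfolding beta_def by simp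
  then have "shift_ratio (\<lambda>j. real (beta a k j)) k i = 0"
    unfolding shift_ratio_def using i False
    by (intro prod_zero bexI[of _ "i + 1"]) auto
  then show ?thesis by simp
qed

lemma sum_beta:
  "(\<Sum>i<k. real (beta a k i)) = real (\<Sum>i<k. a i) + real k * (real k - 1) / 2"
proof -
  have "(\<Sum>i<k. real (k - 1 - i)) = (\<Sum>i<k. real i)"
    using sum.nat_diff_reindex[of "\<lambda>i. real i" k] by simp
  also have "\<dots> = real k * (real k - 1) / 2"
    by (induction k) (simp_all add: field_simps)
  finally have gauss: "(\<Sum>i<k. real (k - 1 - i)) = real k * (real k - 1) / 2" .
  show ?thesis unfolding beta_def of_nat_add sum.distrib of_nat_sum gauss ..
qed

lemma frobenius_count_branching:
  assumes dec: "decreasing_upto a k" and pos: "0 < (\<Sum>i<k. a i)"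
  shows "frobenius_count a k = (\<Sum>i | removable a k i. frobenius_count (a(i := a i - 1)) k)"
proof -
  define N where "N = (\<Sum>i<k. a i)"
  define R where "R i = real (beta a k i) * shift_ratio (\<lambda>j. real (beta a k j)) k i" for i
  have "(\<Sum>i | removable a k i. frobenius_count (a(i := a i - 1)) k)
      = (\<Sum>i | removable a k i. frobenius_count a k * R i / real N)"
    unfolding R_def N_def
    by (intro sum.cong refl frobenius_count_decrement[OF dec]) (auto simp: removable_def)
  also have "\<dots> = frobenius_count a k / real N * (\<Sum>i | removable a k i. R i)"
    by (simp add: sum_distrib_left)
  also have "(\<Sum>i | removable a k i. R i) = (\<Sum>i<k. R i)"
    using beta_mult_shift_ratio_not_removable[OF dec]
    by (intro sum.mono_neutral_left) (auto simp: removable_def R_def)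
  also have "\<dots> = real N"
    unfolding R_def N_def using sum_mult_shift_ratio[of "\<lambda>j. real (beta a k j)" k] inj_on_beta[OF dec]
    by (simp add: inj_on_def sum_beta)
  also have "frobenius_count a k / real N * real N = frobenius_count a k"
  proof -
    have "real N \<noteq> 0" using pos unfolding N_def[symmetric] by simp
    then show ?thesis by simp
  qed
  finally show ?thesis by (rule sym)
qed

definition syt_cells :: "(nat \<times> nat) set \<Rightarrow> (nat \<times> nat \<Rightarrow> nat) set" where
  "syt_cells D = {T. bij_betw T D {1..card D}
              \<and> (\<forall>c. c \<notin> D \<longrightarrow> T c = 0)
              \<and> (\<forall>i j. (i, j) \<in> D \<and> (i, j + 1) \<in> D \<longrightarrow> T (i, j) < T (i, j + 1))
              \<and> (\<forall>i j. (i, j) \<in> D \<and> (i + 1, j) \<in> D \<longrightarrow> T (i, j) < T (i + 1, j))}"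

definition is_corner :: "(nat \<times> nat) set \<Rightarrow> nat \<times> nat \<Rightarrow> bool" where
  "is_corner D c \<longleftrightarrow> c \<in> D \<and> (fst c, snd c + 1) \<notin> D \<and> (fst c + 1, snd c) \<notin> D"

lemma syt_cellsI:
  assumes "bij_betw T D {1..card D}" "\<And>c. c \<notin> D \<Longrightarrow> T c = 0"
    "\<And>i j. (i, j) \<in> D \<Longrightarrow> (i, j + 1) \<in> D \<Longrightarrow> T (i, j) < T (i, j + 1)"
    "\<And>i j. (i, j) \<in> D \<Longrightarrow> (i + 1, j) \<in> D \<Longrightarrow> T (i, j) < T (i + 1, j)"
  shows "T \<in> syt_cells D"
  unfolding syt_cells_def using assms by blast

lemma syt_cellsD:
  assumes "T \<in> syt_cells D"
  shows syt_cells_bij: "bij_betw T D {1..card D}"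
    and syt_cells_outside: "c \<notin> D \<Longrightarrow> T c = 0"
    and syt_cells_row: "(i, j) \<in> D \<Longrightarrow> (i, j + 1) \<in> D \<Longrightarrow> T (i, j) < T (i, j + 1)"
    and syt_cells_col: "(i, j) \<in> D \<Longrightarrow> (i + 1, j) \<in> D \<Longrightarrow> T (i, j) < T (i + 1, j)"
  using assms unfolding syt_cells_def by blast+

lemma finite_syt_cells:
  assumes "finite D"
  shows "finite (syt_cells D)"
proof (rule finite_subset)
  show "syt_cells D \<subseteq> {T. \<forall>c. (c \<in> D \<longrightarrow> T c \<in> {1..card D}) \<and> (c \<notin> D \<longrightarrow> T c = 0)}"
    unfolding syt_cells_def bij_betw_def by auto
  show "finite \<dots>" using assms by (intro finite_set_of_finite_funs) auto
qed

lemma syt_cells_max_at_corner: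
  assumes "finite D" "D \<noteq> {}" "T \<in> syt_cells D"
  obtains c where "is_corner D c" "T c = card D"
proof -
  note bij = syt_cells_bij[OF assms(3)]
  have "card D \<in> {1..card D}" using assms(1,2) by (simp add: Suc_leI card_gt_0_iff)
  then obtain i j where c: "(i, j) \<in> D" "T (i, j) = card D"
    using bij unfolding bij_betw_def by (metis imageE prod.exhaust)
  have le: "T d \<le> card D" if "d \<in> D" for d using bij that unfolding bij_betw_def by auto
  have "(i, j + 1) \<notin> D" using syt_cells_row[OF assms(3) c(1)] le c(2) by fastforce
  moreover have "(i + 1, j) \<notin> D" using syt_cells_col[OF assms(3) c(1)] le c(2) by fastforce
  ultimately show ?thesis using c that unfolding is_corner_def by auto
qed

lemma syt_cells_delete_corner:
  assumes fin: "finite D" and cor: "is_corner D c" and T: "T \<in> syt_cells D" "T c = card D"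
  shows "T(c := 0) \<in> syt_cells (D - {c})"
proof (rule syt_cellsI)
  define N where "N = card D"
  have cD: "c \<in> D" using cor unfolding is_corner_def by simp
  have N1: "1 \<le> N" using fin cD unfolding N_def by (simp add: Suc_le_eq card_gt_0_iff) blast
  have "bij_betw T {c} {N}" using T(2) by (simp add: bij_betw_def N_def)
  with syt_cells_bij[OF T(1)] have "bij_betw T (D - {c}) ({1..N} - {N})"
    unfolding N_def by (rule bij_betw_DiffI) (use cD N1 in \<open>auto simp: N_def\<close>)
  moreover have "{1..N} - {N} = {1..card (D - {c})}" using fin cD N1 by (auto simp: N_def)
  ultimately show "bij_betw (T(c := 0)) (D - {c}) {1..card (D - {c})}"
    using bij_betw_cong[of "D - {c}" "T(c := 0)" T] by simp
qed (use syt_cellsD[OF T(1)] in auto)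

lemma syt_cells_insert_corner:
  assumes fin: "finite D" and cor: "is_corner D c" and T: "T \<in> syt_cells (D - {c})"
  shows "T(c := card D) \<in> syt_cells D"
proof (rule syt_cellsI)
  define N where "N = card D"
  have cD: "c \<in> D" using cor unfolding is_corner_def by simp
  have N1: "1 \<le> N" using fin cD unfolding N_def by (simp add: Suc_le_eq card_gt_0_iff) blast
  have c_right: "(fst c, snd c + 1) \<notin> D" and c_below: "(fst c + 1, snd c) \<notin> D"
    using cor unfolding is_corner_def by simp_all
  have bij: "bij_betw T (D - {c}) {1..N - 1}"
    using syt_cells_bij[OF T] fin cD unfolding N_def by simp
  have lt: "T d < N" if "d \<in> D - {c}" for d
  proof -
    have "T d \<in> {1..N - 1}" using bij that unfolding bij_betw_def by blast
    then show ?thesis using N1 by auto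
  qed
  have "bij_betw (T(c := N)) (D - {c}) {1..N - 1}"
    using bij bij_betw_cong[of "D - {c}" "T(c := N)" T] by simp
  moreover have "bij_betw (T(c := N)) {c} {N}" by (simp add: bij_betw_def)
  ultimately have "bij_betw (T(c := N)) ((D - {c}) \<union> {c}) ({1..N - 1} \<union> {N})"
    by (rule bij_betw_combine) auto
  moreover have "(D - {c}) \<union> {c} = D" "{1..N - 1} \<union> {N} = {1..N}" using cD N1 by auto
  ultimately show "bij_betw (T(c := card D)) D {1..card D}" unfolding N_def by simp
  show "(T(c := card D)) d = 0" if "d \<notin> D" for d
    using that cD syt_cells_outside[OF T, of d] by auto
  show "(T(c := card D)) (i, j) < (T(c := card D)) (i, j + 1)" if "(i, j) \<in> D" "(i, j + 1) \<in> D" for i j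
    using that lt c_right syt_cells_row[OF T, of i j] unfolding N_def by (cases "(i, j + 1) = c") auto
  show "(T(c := card D)) (i, j) < (T(c := card D)) (i + 1, j)" if "(i, j) \<in> D" "(i + 1, j) \<in> D" for i j
    using that lt c_below syt_cells_col[OF T, of i j] unfolding N_def by (cases "(i + 1, j) = c") auto
qed

lemma syt_cells_remove_corner:
  assumes fin: "finite D" and cor: "is_corner D c"
  shows "bij_betw (\<lambda>T. T(c := 0)) {T \<in> syt_cells D. T c = card D} (syt_cells (D - {c}))"
proof (rule bij_betw_byWitness[where f' = "\<lambda>T. T(c := card D)"])
  show "\<forall>T\<in>{T \<in> syt_cells D. T c = card D}. (T(c := 0))(c := card D) = T"
    by (simp add: fun_upd_idem)
  show "\<forall>T\<in>syt_cells (D - {c}). (T(c := card D))(c := 0) = T"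
  proof
    fix T assume "T \<in> syt_cells (D - {c})"
    then have "T c = 0" by (rule syt_cells_outside) simp
    then show "(T(c := card D))(c := 0) = T" by (simp add: fun_upd_idem)
  qed
  show "(\<lambda>T. T(c := 0)) ` {T \<in> syt_cells D. T c = card D} \<subseteq> syt_cells (D - {c})"
    using syt_cells_delete_corner[OF fin cor] by blast
  show "(\<lambda>T. T(c := card D)) ` syt_cells (D - {c}) \<subseteq> {T \<in> syt_cells D. T c = card D}"
    using syt_cells_insert_corner[OF fin cor] by auto
qed

lemma card_syt_cells_branching:
  assumes fin: "finite D" and ne: "D \<noteq> {}"
  shows "card (syt_cells D) = (\<Sum>c | is_corner D c. card (syt_cells (D - {c})))"
proof -
  let ?S = "\<lambda>c. {T \<in> syt_cells D. T c = card D}"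
  have fin_corners: "finite {c. is_corner D c}"
    using fin by (rule finite_subset[rotated]) (auto simp: is_corner_def)
  have union: "syt_cells D = (\<Union>c\<in>{c. is_corner D c}. ?S c)"
  proof
    show "syt_cells D \<subseteq> (\<Union>c\<in>{c. is_corner D c}. ?S c)"
    proof
      fix T assume T: "T \<in> syt_cells D"
      then obtain c where "is_corner D c" "T c = card D" by (rule syt_cells_max_at_corner[OF fin ne])
      with T show "T \<in> (\<Union>c\<in>{c. is_corner D c}. ?S c)" by blast
    qed
  qed blast
  have disjoint: "?S c \<inter> ?S d = {}" if "is_corner D c" "is_corner D d" "c \<noteq> d" for c d
  proof -
    have "T c \<noteq> T d" if "T \<in> syt_cells D" for T
      using syt_cells_bij[OF that] \<open>is_corner D c\<close> \<open>is_corner D d\<close> \<open>c \<noteq> d\<close>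
      unfolding bij_betw_def inj_on_def is_corner_def by blast
    then show ?thesis by (auto simp del: mem_Collect_eq) metis
  qed
  have "card (syt_cells D) = card (\<Union>c\<in>{c. is_corner D c}. ?S c)"
    by (rule arg_cong[OF union])
  also have "\<dots> = (\<Sum>c | is_corner D c. card (?S c))"
    using finite_syt_cells[OF fin] disjoint by (intro card_UN_disjoint[OF fin_corners]) auto
  also have "\<dots> = (\<Sum>c | is_corner D c. card (syt_cells (D - {c})))"
    using syt_cells_remove_corner[OF fin] by (intro sum.cong refl bij_betw_same_card) simp
  finally show ?thesis .
qed

text \<open>Row i + 1 of the diagram (rows are 1-based as in young) has a i cells.\<close>

definition diagram :: "(nat \<Rightarrow> nat) \<Rightarrow> nat \<Rightarrow> (nat \<times> nat) set" where
  "diagram a k = {(i, j). 1 \<le> i \<and> i \<le> k \<and> 1 \<le> j \<and> j \<le> a (i - 1)}"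

lemma diagram_eq_UN: "diagram a k = (\<Union>i<k. Pair (i + 1) ` {1..a i})"
proof (intro set_eqI iffI)
  fix c assume "c \<in> diagram a k"
  then obtain i j where "c = (i, j)" "1 \<le> i" "i \<le> k" "j \<in> {1..a (i - 1)}"
    unfolding diagram_def by auto
  then have "i - 1 < k" "c = Pair (i - 1 + 1) j" "j \<in> {1..a (i - 1)}" by auto
  then show "c \<in> (\<Union>i<k. Pair (i + 1) ` {1..a i})" by blast
qed (auto simp: diagram_def)

lemma finite_diagram: "finite (diagram a k)"
  unfolding diagram_eq_UN by auto

lemma card_diagram: "card (diagram a k) = (\<Sum>i<k. a i)"
  unfolding diagram_eq_UN by (subst card_UN_disjoint) (auto simp: card_image inj_on_def)

lemma diagram_cong: "(\<And>i. i < k \<Longrightarrow> a i = b i) \<Longrightarrow> diagram a k = diagram b k"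
  unfolding diagram_def by force

lemma corners_diagram:
  assumes "decreasing_upto a k"
  shows "{c. is_corner (diagram a k) c} = (\<lambda>i. (i + 1, a i)) ` {i. removable a k i}"
proof (intro set_eqI iffI)
  fix c assume "c \<in> {c. is_corner (diagram a k) c}"
  then obtain p j where cor: "is_corner (diagram a k) (p, j)" and c: "c = (p, j)" by (cases c) auto
  then have pj: "1 \<le> p" "p \<le> k" "1 \<le> j" "j \<le> a (p - 1)"
    and "(p, j + 1) \<notin> diagram a k" "(p + 1, j) \<notin> diagram a k"
    unfolding is_corner_def diagram_def by auto
  then have "j = a (p - 1)" "p = k \<or> a p < a (p - 1)" unfolding diagram_def by auto
  with pj have "removable a k (p - 1)" "c = ((p - 1) + 1, a (p - 1))"
    unfolding removable_def c by auto
  then show "c \<in> (\<lambda>i. (i + 1, a i)) ` {i. removable a k i}" by blast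
next
  fix c assume "c \<in> (\<lambda>i. (i + 1, a i)) ` {i. removable a k i}"
  then obtain i where "removable a k i" and c: "c = (i + 1, a i)" by auto
  then show "c \<in> {c. is_corner (diagram a k) c}"
    unfolding removable_def is_corner_def diagram_def by auto
qed

lemma diagram_remove_corner:
  assumes "i < k" "0 < a i"
  shows "diagram a k - {(i + 1, a i)} = diagram (a(i := a i - 1)) k"
  using assms unfolding diagram_def by (auto split: if_splits)

theorem card_syt_diagram:
  assumes "decreasing_upto a k"
  shows "real (card (syt_cells (diagram a k))) = frobenius_count a k"
  using assms
proof (induction "\<Sum>i<k. a i" arbitrary: a rule: less_induct)
  case less
  show ?case
  proof (cases "(\<Sum>i<k. a i) = 0")
    case True
    then have "diagram a k = {}" "\<And>i. i < k \<Longrightarrow> a i = 0"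
      using card_diagram[of a k] finite_diagram[of a k] by auto
    moreover have "syt_cells {} = {\<lambda>_. 0}" unfolding syt_cells_def by (auto simp: bij_betw_def)
    ultimately show ?thesis using frobenius_count_zero by simp
  next
    case False
    have "diagram a k \<noteq> {}" using False card_diagram[of a k] by auto
    then have "real (card (syt_cells (diagram a k)))
        = (\<Sum>c | is_corner (diagram a k) c. real (card (syt_cells (diagram a k - {c}))))"
      by (simp add: card_syt_cells_branching[OF finite_diagram])
    also have "\<dots> = (\<Sum>i | removable a k i. real (card (syt_cells (diagram a k - {(i + 1, a i)}))))"
      unfolding corners_diagram[OF less.prems] by (subst sum.reindex) (auto simp: inj_on_def)
    also have "\<dots> = (\<Sum>i | removable a k i. frobenius_count (a(i := a i - 1)) k)"
    proof (rule sum.cong[OF refl])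
      fix i assume "i \<in> {i. removable a k i}"
      then have rem: "removable a k i" by simp
      then have "i < k" "0 < a i" unfolding removable_def by auto
      moreover have "(\<Sum>j<k. (a(i := a i - 1)) j) < (\<Sum>j<k. a j)"
        using sum_fun_upd_decrement[of i k a] calculation by simp
      ultimately show "real (card (syt_cells (diagram a k - {(i + 1, a i)})))
          = frobenius_count (a(i := a i - 1)) k"
        using less.hyps decreasing_upto_decrement[OF less.prems rem] diagram_remove_corner by simp
    qed
    also have "\<dots> = frobenius_count a k"
      using frobenius_count_branching[OF less.prems] False by simp
    finally show ?thesis .
  qed
qed

definition part_fun :: "nat list \<Rightarrow> nat \<Rightarrow> nat" where
  "part_fun mu i = (if i < length mu then mu ! i else 0)"

lemma young_eq_diagram:
  assumes "length mu \<le> k"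
  shows "young mu = diagram (part_fun mu) k"
  using assms unfolding young_def diagram_def part_fun_def by (auto split: if_splits)

lemma psize_eq_sum_part_fun:
  assumes "length mu \<le> k"
  shows "psize mu = (\<Sum>i<k. part_fun mu i)"
proof -
  have "psize mu = (\<Sum>i<length mu. part_fun mu i)"
    unfolding psize_def part_fun_def by (simp add: sum_list_sum_nth atLeast0LessThan)
  also have "\<dots> = (\<Sum>i<k. part_fun mu i)"
    using assms by (intro sum.mono_neutral_left) (auto simp: part_fun_def)
  finally show ?thesis .
qed

lemma num_syt_eq_card_syt_cells: "num_syt mu = card (syt_cells (young mu))"
proof -
  have "psize mu = card (young mu)"
    using psize_eq_sum_part_fun[of mu "length mu"] young_eq_diagram[of mu "length mu"] card_diagram
    by simp
  then show ?thesis unfolding num_syt_def syt_def syt_cells_def by simp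
qed

lemma decreasing_upto_part_fun:
  assumes "is_partition mu"
  shows "decreasing_upto (part_fun mu) k"
  unfolding decreasing_upto_def part_fun_def
  using assms sorted_wrt_nth_less[of "(\<ge>)" mu] unfolding is_partition_def
  by (auto simp: le_less)

lemma num_syt_eq_frobenius_count:
  assumes "is_partition mu" "length mu \<le> k"
  shows "real (num_syt mu) = frobenius_count (part_fun mu) k"
  unfolding num_syt_eq_card_syt_cells young_eq_diagram[OF assms(2)]
  by (rule card_syt_diagram[OF decreasing_upto_part_fun[OF assms(1)]])

lemma young_partition_inj:
  assumes mu: "is_partition mu" and nu: "is_partition nu" and eq: "young mu = young nu"
  shows "mu = nu"
proof -
  have first_col: "(i, 1) \<in> young la \<longleftrightarrow> 1 \<le> i \<and> i \<le> length la" if "is_partition la" for la i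
    using that unfolding is_partition_def young_def by (auto simp: Suc_le_eq)
  have len_le: "length la \<le> length la'"
    if "is_partition la" "is_partition la'" "young la = young la'" for la la'
    using first_col[OF that(1), of "length la"] first_col[OF that(2), of "length la"] that(3)
    by (cases "length la = 0") auto
  have len: "length mu = length nu" using len_le mu nu eq by (metis le_antisym)
  have row: "(i + 1, j) \<in> young la \<longleftrightarrow> 1 \<le> j \<and> j \<le> la ! i" if "i < length la" for la i j
    using that unfolding young_def by simp
  show ?thesis
  proof (rule nth_equalityI[OF len])
    fix i assume i: "i < length mu"
    have i': "i < length nu" using i len by simp
    have "0 < mu ! i" "0 < nu ! i" using mu nu i i' unfolding is_partition_def by auto
    then have "mu ! i \<le> nu ! i" "nu ! i \<le> mu ! i"
      using row[OF i, of "mu ! i"] row[OF i', of "mu ! i"] row[OF i, of "nu ! i"] row[OF i', of "nu ! i"] eq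
      by auto
    then show "mu ! i = nu ! i" by simp
  qed
qed

lemma partition_of_decreasing:
  assumes dec: "decreasing_upto b k"
  obtains nu where "is_partition nu" "young nu = diagram b k"
proof -
  define nu where "nu = takeWhile (\<lambda>x. 0 < x) (map b [0..<k])"
  have "sorted_wrt (\<ge>) (map b [0..<k])"
    using dec unfolding sorted_wrt_iff_nth_less decreasing_upto_def by simp
  then have "sorted_wrt (\<ge>) nu" unfolding nu_def by (metis sorted_wrt_take takeWhile_eq_take)
  moreover have "\<forall>x\<in>set nu. 0 < x" unfolding nu_def by (auto dest: set_takeWhileD)
  ultimately have "is_partition nu" unfolding is_partition_def by simp
  have len: "length nu \<le> k" unfolding nu_def using length_takeWhile_le[of _ "map b [0..<k]"] by simp
  have "part_fun nu i = b i" if "i < k" for i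
  proof (cases "i < length nu")
    case True
    then show ?thesis unfolding part_fun_def nu_def using that by (simp add: takeWhile_nth)
  next
    case False
    have "length nu < k" using False that len by simp
    then have "b (length nu) = 0" unfolding nu_def using nth_length_takeWhile[of "\<lambda>x. 0 < x" "map b [0..<k]"] by simp
    moreover have "b i \<le> b (length nu)" using dec False that unfolding decreasing_upto_def by simp
    ultimately show ?thesis using False unfolding part_fun_def by simp
  qed
  then have "young nu = diagram b k" unfolding young_eq_diagram[OF len] by (rule diagram_cong)
  with \<open>is_partition nu\<close> show ?thesis by (rule that)
qed

text \<open>The rows of the complement of diagram a in the m x n box, rotated by 180 degrees.
  The guard r < m makes box_complement m n (a(0 := a 0 + 1)) literally equal to
  box_complement m n a with its last row shortened by one.\<close>

definition box_complement :: "nat \<Rightarrow> nat \<Rightarrow> (nat \<Rightarrow> nat) \<Rightarrow> nat \<Rightarrow> nat" where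
  "box_complement m n a r = (if r < m then n - a (m - 1 - r) else 0)"

lemma diagram_box_complement:
  assumes "\<And>i. i < m \<Longrightarrow> a i \<le> n"
  shows "{(m - i + 1, n - j + 1) | i j. (i, j) \<in> box m n - diagram a m} = diagram (box_complement m n a) m"
proof (intro set_eqI iffI)
  fix c assume "c \<in> {(m - i + 1, n - j + 1) | i j. (i, j) \<in> box m n - diagram a m}"
  then obtain i j where c: "c = (m - i + 1, n - j + 1)" and ij: "1 \<le> i" "i \<le> m" "1 \<le> j" "j \<le> n"
    and "\<not> j \<le> a (i - 1)"
    unfolding box_def diagram_def by auto
  moreover have "m - 1 - (m - i + 1 - 1) = i - 1" using ij by simp
  ultimately show "c \<in> diagram (box_complement m n a) m"
    unfolding diagram_def box_complement_def by auto
next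
  fix c assume "c \<in> diagram (box_complement m n a) m"
  then obtain p q where c: "c = (p, q)" and pq: "1 \<le> p" "p \<le> m" "1 \<le> q" "q \<le> n - a (m - p)"
    unfolding diagram_def box_complement_def by (auto simp: diff_diff_add split: if_splits)
  moreover have "a (m - p) \<le> n" using assms pq by simp
  ultimately have "(m - p + 1, n - q + 1) \<in> box m n - diagram a m"
    and "c = (m - (m - p + 1) + 1, n - (n - q + 1) + 1)"
    unfolding box_def diagram_def by auto
  then show "c \<in> {(m - i + 1, n - j + 1) | i j. (i, j) \<in> box m n - diagram a m}" by blast
qed

lemma decreasing_upto_box_complement:
  "decreasing_upto a m \<Longrightarrow> decreasing_upto (box_complement m n a) m"
  unfolding decreasing_upto_def box_complement_def by (auto intro: diff_le_mono2)

lemma young_subset_box: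
  assumes "is_partition mu" "young mu \<subseteq> box m n"
  shows "length mu \<le> m" and "\<And>i. part_fun mu i \<le> n"
proof -
  have pos: "0 < mu ! i" if "i < length mu" for i using assms(1) that unfolding is_partition_def by auto
  show "length mu \<le> m"
  proof (cases mu)
    case (Cons x xs)
    then have "(length mu, 1) \<in> young mu" using pos[of "length mu - 1"] unfolding young_def by auto
    then show ?thesis using assms(2) unfolding box_def by auto
  qed simp
  show "part_fun mu i \<le> n" for i
  proof (cases "i < length mu")
    case True
    then have "(i + 1, mu ! i) \<in> young mu" using pos[OF True] unfolding young_def by auto
    then show ?thesis using assms(2) True unfolding box_def part_fun_def by auto
  qed (simp add: part_fun_def)
qed

lemma num_syt_box_minus:
  assumes mu: "is_partition mu" and box: "young mu \<subseteq> box m n"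
  shows "real (num_syt (box_minus m n mu)) = frobenius_count (box_complement m n (part_fun mu)) m"
proof -
  let ?S = "{(m - i + 1, n - j + 1) | i j. (i, j) \<in> box m n - young mu}"
  have dec: "decreasing_upto (box_complement m n (part_fun mu)) m"
    by (intro decreasing_upto_box_complement decreasing_upto_part_fun mu)
  have S: "?S = diagram (box_complement m n (part_fun mu)) m"
    unfolding young_eq_diagram[OF young_subset_box(1)[OF mu box]]
    by (rule diagram_box_complement) (rule young_subset_box(2)[OF mu box])
  obtain nu where nu: "is_partition nu" "young nu = diagram (box_complement m n (part_fun mu)) m"
    by (rule partition_of_decreasing[OF dec])
  have "box_minus m n mu = nu"
    unfolding box_minus_def S
    by (rule the_equality) (use nu young_partition_inj in auto)
  then show ?thesis
    unfolding num_syt_eq_card_syt_cells using nu(2) card_syt_diagram[OF dec] by simp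
qed

lemma shift_ratio_cong:
  assumes "\<And>j. j < k \<Longrightarrow> x j = y j" "i < k"
  shows "shift_ratio x k i = shift_ratio y k i"
  unfolding shift_ratio_def using assms by (intro prod.cong) auto

lemma shift_ratio_increment_mult_reflect:
  fixes x :: "nat \<Rightarrow> real"
  assumes i: "i < k" and top: "\<And>j. j < k \<Longrightarrow> j \<noteq> i \<Longrightarrow> x j < x i"
  shows "shift_ratio (x(i := x i + 1)) k i * shift_ratio (\<lambda>r. C - x (k - 1 - r)) k (k - 1 - i) = 1"
proof -
  have "shift_ratio (x(i := x i + 1)) k i = (\<Prod>j\<in>{..<k} - {i}. (x i - x j) / (x i + 1 - x j))"
    unfolding shift_ratio_def by (intro prod.cong) auto
  moreover have "shift_ratio (\<lambda>r. C - x (k - 1 - r)) k (k - 1 - i)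
      = (\<Prod>j\<in>{..<k} - {i}. (x j - x i - 1) / (x j - x i))"
    unfolding shift_ratio_def using i
    by (intro prod.reindex_bij_witness[where i = "\<lambda>j. k - 1 - j" and j = "\<lambda>r. k - 1 - r"]) auto
  moreover have "(\<Prod>j\<in>{..<k} - {i}. (x i - x j) / (x i + 1 - x j))
      * (\<Prod>j\<in>{..<k} - {i}. (x j - x i - 1) / (x j - x i)) = (\<Prod>j\<in>{..<k} - {i}. 1)"
    unfolding prod.distrib[symmetric]
  proof (rule prod.cong[OF refl])
    fix j assume "j \<in> {..<k} - {i}"
    then have "x i + 1 - x j \<noteq> 0" "x i - x j \<noteq> 0" using top by force+
    moreover have "(x j - x i - 1) / (x j - x i) = (x i + 1 - x j) / (x i - x j)"
      using minus_divide_divide[of "x i + 1 - x j" "x i - x j"] by (simp add: algebra_simps)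
    ultimately show "(x i - x j) / (x i + 1 - x j) * ((x j - x i - 1) / (x j - x i)) = 1" by simp
  qed
  ultimately show ?thesis by simp
qed

lemma beta_box_complement:
  assumes "\<And>i. i < m \<Longrightarrow> a i \<le> n" "r < m"
  shows "beta (box_complement m n a) m r + beta a m (m - 1 - r) = n + m - 1"
proof -
  have "a (m - 1 - r) \<le> n" using assms by simp
  then show ?thesis using assms(2) unfolding beta_def box_complement_def by simp
qed

lemma sum_box_complement:
  assumes "\<And>i. i < m \<Longrightarrow> a i \<le> n"
  shows "(\<Sum>r<m. box_complement m n a r) + (\<Sum>i<m. a i) = m * n"
proof -
  have "(\<Sum>r<m. box_complement m n a r) = (\<Sum>i<m. n - a i)"
    unfolding box_complement_def using sum.nat_diff_reindex[of "\<lambda>i. n - a i" m] by simp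
  also have "\<dots> + (\<Sum>i<m. a i) = (\<Sum>i<m. n)"
    using assms by (simp flip: sum.distrib)
  finally show ?thesis by simp
qed

lemma decreasing_upto_increment_first:
  "decreasing_upto a m \<Longrightarrow> decreasing_upto (a(0 := a 0 + 1)) m"
  unfolding decreasing_upto_def by (auto simp: le_Suc_eq)

lemma frobenius_count_increment_first:
  assumes dec: "decreasing_upto a m" and m: "0 < m"
  shows "frobenius_count a m
       = frobenius_count (a(0 := a 0 + 1)) m
         * ((real m + real (a 0)) * shift_ratio ((\<lambda>j. real (beta a m j))(0 := real (beta a m 0) + 1)) m 0)
         / (real (\<Sum>i<m. a i) + 1)"
proof -
  define a' where "a' = a(0 := a 0 + 1)"
  have "frobenius_count (a'(0 := a' 0 - 1)) m
      = frobenius_count a' m * (real (beta a' m 0) * shift_ratio (\<lambda>j. real (beta a' m j)) m 0)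
        / real (\<Sum>j<m. a' j)"
    using decreasing_upto_increment_first[OF dec] m unfolding a'_def
    by (rule frobenius_count_decrement) simp
  moreover have "a'(0 := a' 0 - 1) = a" unfolding a'_def by simp
  moreover have "(\<Sum>j<m. a' j) = (\<Sum>i<m. a i) + 1"
    using sum_fun_upd_decrement[of 0 m a'] m unfolding a'_def by simp
  then have "real (\<Sum>j<m. a' j) = real (\<Sum>i<m. a i) + 1" by simp
  moreover have "(\<lambda>j. real (beta a' m j)) = (\<lambda>j. real (beta a m j))(0 := real (beta a m 0) + 1)"
    and "real (beta a' m 0) = real m + real (a 0)"
    using m unfolding a'_def by (auto simp: beta_def)
  ultimately show ?thesis unfolding a'_def by simp
qed

lemma frobenius_count_box_complement_increment_first:
  assumes dec: "decreasing_upto a m" and m: "0 < m" and a0: "a 0 < n"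
  shows "frobenius_count (box_complement m n (a(0 := a 0 + 1))) m
       = frobenius_count (box_complement m n a) m
         * ((real n - real (a 0))
            * shift_ratio (\<lambda>r. real (n + m - 1) - real (beta a m (m - 1 - r))) m (m - 1))
         / (real m * real n - real (\<Sum>i<m. a i))"
proof -
  define b where "b = box_complement m n a"
  have le: "a i \<le> n" if "i < m" for i
  proof -
    have "a i \<le> a 0" using dec that unfolding decreasing_upto_def by blast
    with a0 show ?thesis by simp
  qed
  have bm: "b (m - 1) = n - a 0" using m by (simp add: b_def box_complement_def)
  have upd: "box_complement m n (a(0 := a 0 + 1)) = b(m - 1 := b (m - 1) - 1)"
    using m unfolding b_def box_complement_def by (auto simp: fun_eq_iff)
  have decr: "frobenius_count (b(m - 1 := b (m - 1) - 1)) m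
      = frobenius_count b m * (real (beta b m (m - 1)) * shift_ratio (\<lambda>j. real (beta b m j)) m (m - 1))
        / real (\<Sum>j<m. b j)"
    by (rule frobenius_count_decrement) (use decreasing_upto_box_complement[OF dec] m a0 bm b_def in simp_all)
  have beta_last: "real (beta b m (m - 1)) = real n - real (a 0)"
    using bm a0 by (simp add: beta_def)
  have reflect: "shift_ratio (\<lambda>j. real (beta b m j)) m (m - 1)
      = shift_ratio (\<lambda>r. real (n + m - 1) - real (beta a m (m - 1 - r))) m (m - 1)"
    using m beta_box_complement[OF le] unfolding b_def
    by (intro shift_ratio_cong) (simp_all add: eq_diff_eq flip: of_nat_add)
  have "real ((\<Sum>j<m. b j) + (\<Sum>i<m. a i)) = real (m * n)"
    using sum_box_complement[OF le] unfolding b_def by (rule arg_cong)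
  then have "real (\<Sum>j<m. b j) + real (\<Sum>i<m. a i) = real m * real n"
    by (simp only: of_nat_add of_nat_mult)
  then have size: "real (\<Sum>j<m. b j) = real m * real n - real (\<Sum>i<m. a i)" by linarith
  show ?thesis unfolding b_def[symmetric] upd decr beta_last reflect size ..
qed

lemma frobenius_count_box_ratio:
  assumes dec: "decreasing_upto a m" and m: "0 < m" and a0: "a 0 < n"
  shows "frobenius_count a m * frobenius_count (box_complement m n (a(0 := a 0 + 1))) m
         / (frobenius_count (a(0 := a 0 + 1)) m * frobenius_count (box_complement m n a) m)
       = (real m + real (a 0)) * (real n - real (a 0))
         / ((real (\<Sum>i<m. a i) + 1) * (real m * real n - real (\<Sum>i<m. a i)))"
proof -
  let ?x = "\<lambda>j. real (beta a m j)"
  define s where "s = shift_ratio (?x(0 := ?x 0 + 1)) m 0"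
  define t where "t = shift_ratio (\<lambda>r. real (n + m - 1) - ?x (m - 1 - r)) m (m - 1)"
  define F where "F = frobenius_count (a(0 := a 0 + 1)) m"
  define G where "G = frobenius_count (box_complement m n a) m"
  have "?x j < ?x 0" if "j < m" "j \<noteq> 0" for j
    using beta_strict_decreasing[OF dec, of 0 j] that by simp
  then have st: "s * t = 1"
    using shift_ratio_increment_mult_reflect[of 0 m ?x "real (n + m - 1)", OF m] unfolding s_def t_def
    by simp
  have "0 < F" "0 < G"
    using frobenius_count_pos[OF decreasing_upto_increment_first[OF dec]]
      frobenius_count_pos[OF decreasing_upto_box_complement[OF dec]]
    unfolding F_def G_def by blast+
  then have cancel: "(F * (A * s) / D1) * (G * (B * t) / D2) / (F * G) = A * B * (s * t) / (D1 * D2)"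
    for A B D1 D2 :: real
    by simp
  show ?thesis using st cancel
    unfolding frobenius_count_increment_first[OF dec m] frobenius_count_box_complement_increment_first[OF dec m a0]
      F_def[symmetric] G_def[symmetric] s_def[symmetric] t_def[symmetric]
    by simp
qed

lemma is_partition_plus_part: "is_partition lam \<Longrightarrow> is_partition (plus_part lam)"
  by (cases lam) (auto simp: plus_part_def is_partition_def)

lemma part_fun_plus_part: "part_fun (plus_part lam) = (part_fun lam)(0 := part_fun lam 0 + 1)"
  by (cases lam) (auto simp: plus_part_def part_fun_def fun_eq_iff nth_Cons')

lemma young_subset_young_plus_part: "young lam \<subseteq> young (plus_part lam)"
  by (cases lam) (auto simp: plus_part_def young_def nth_Cons')

lemma first_part_eq_part_fun: "first_part lam = part_fun lam 0"
  by (cases lam) (auto simp: first_part_def part_fun_def)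

theorem mainTheorem5:
  fixes m n :: nat and lam :: "nat list"
  assumes "is_partition lam"
    and "young (plus_part lam) \<subseteq> box m n"
  shows "real (num_syt lam) * real (num_syt (box_minus m n (plus_part lam)))
           / (real (num_syt (plus_part lam)) * real (num_syt (box_minus m n lam)))
         = (real m + real (first_part lam)) * (real n - real (first_part lam))
           / ((real (psize lam) + 1) * (real m * real n - real (psize lam)))"
proof -
  note lam = assms(1) and lam_plus = is_partition_plus_part[OF assms(1)]
  have len_plus: "length (plus_part lam) \<le> m" and "part_fun (plus_part lam) 0 \<le> n"
    using young_subset_box[OF lam_plus assms(2)] by blast+
  then have a0: "part_fun lam 0 < n" by (simp add: part_fun_plus_part)
  from len_plus have m: "0 < m" and len: "length lam \<le> m"
    by (auto simp: plus_part_def split: list.splits)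
  have box: "young lam \<subseteq> box m n" using young_subset_young_plus_part assms(2) by blast
  show ?thesis
    unfolding num_syt_eq_frobenius_count[OF lam len] num_syt_eq_frobenius_count[OF lam_plus len_plus]
      num_syt_box_minus[OF lam box] num_syt_box_minus[OF lam_plus assms(2)]
      part_fun_plus_part first_part_eq_part_fun psize_eq_sum_part_fun[OF len]
    by (rule frobenius_count_box_ratio[OF decreasing_upto_part_fun[OF lam] m a0])
qed

end
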